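(* Let $q$ be a prime power and $\eta\ge0$ an integer. Let $\Delta^*=\bigcup_{(\delta_T,\delta_X)}\Delta^*(\delta_T,\delta_X)$, the union over $(\delta_T,\delta_X)\in\mathbb{Z}\times\mathbb{N}$ with $\delta_T+\eta\delta_X\ge0$. Then $\Delta^*$ is exactly the set of monomials of $R$ that are not divisible by the leading term of any polynomial of $\mathcal{G}$.
   Context: $R=\mathbb{F}_q[T_1,T_2,X_1,X_2]$; the bidegree of $T_1^{c_1}T_2^{c_2}X_1^{d_1}X_2^{d_2}$ is $(c_1+c_2-\eta d_1,d_1+d_2)$; $R(\delta_T,\delta_X)$ is the span of monomials of that bidegree, $\mathcal{M}(\delta_T,\delta_X)$ the set of these monomials; $\delta=\delta_T+\eta\delta_X$. Leading terms are taken for the monomial order: $T_1^{c'_1}T_2^{c'_2}X_1^{d'_1}X_2^{d'_2}<T_1^{c_1}T_2^{c_2}X_1^{d_1}X_2^{d_2}$ iff $d'_1+d'_2<d_1+d_2$, or ($d'_1+d'_2=d_1+d_2$ and $d'_2<d_2$), or ($d'_1=d_1,d'_2=d_2,c'_2<c_2$), or ($d'_1=d_1,d'_2=d_2,c'_2=c_2,c'_1<c_1$). For $\delta\ge0$: $\mathcal{P}=\{(a,b)\in\mathbb{N}^2:a\le\delta_X,\eta a+b\le\delta\}$; $M(d_2,c_2)=T_1^{\delta-\eta d_2-c_2}T_2^{c_2}X_1^{\delta_X-d_2}X_2^{d_2}$; $A=\delta_X$ if $\delta_T\ge0$, $A=\delta/\eta$ if $\delta_T<0$; $\mathcal{A}_X=\{\alpha\in\mathbb{N}:\alpha\le\min(\lfloor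 A\rfloor,q-1)\}\cup(\{A\}\cap\mathbb{N})$; $\mathcal{K}=\{(\alpha,\beta)\in\mathbb{N}^2:\alpha\in\mathcal{A}_X,\beta\le\min(\delta-\eta\alpha,q)-1\text{ or }\beta=\delta-\eta\alpha\}$; (H): $\eta\ge2$, $\delta_T<0$, $\eta\mid\delta_T$, $q\le\delta_X+\delta_T/\eta$; $\mathcal{K}^*=\mathcal{K}\setminus\{(\delta/\eta,0)\}$ if (H), else $\mathcal{K}$; $\Delta^*(\delta_T,\delta_X)=\{M(\alpha,\beta):(\alpha,\beta)\in\mathcal{K}^*\}$. $p(d_2,c_2)=(d'_2,c'_2)$ with $d'_2=d_2$ if $d_2\in\{0,A\}$, else $d'_2\in\{1,\dots,q-1\}$, $d'_2\equiv d_2\pmod{q-1}$; $c'_2=0$ if $c_2=0$; $c'_2=\delta-\eta d'_2$ if $c_2=\delta-\eta d_2$; else $c'_2\in\{1,\dots,q-1\}$, $c'_2\equiv c_2\pmod{q-1}$. Linear $\pi_{(\delta_T,\delta_X)}(M(d_2,c_2))=M(p(d_2,c_2))$, except if (H) and $(d_2,c_2)=(\delta/\eta,0)$: with $\delta/\eta=k(q-1)+r$, $r\in\{1,\dots,q-1\}$, $\pi(M(\delta/\eta,0))=M(r,0)+M(r,\eta k(q-1))-M(r,q-1)$. $\mathcal{G}$ is the union over all $(\delta_T,\delta_X)\in\mathbb{Z}\times\mathbb{N}$ with $\delta\ge0$ of $\{M-\pi_{(\delta_T,\delta_X)}(M):M\in\mathcal{M}(\delta_T,\delta_X)\setminus\Delta^*(\delta_T,\delta_X)\}$.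 *)

theory Defs
  imports Main "HOL.Rat"
begin

text \<open>A monomial T1^c1 T2^c2 X1^d1 X2^d2 of R = F_q[T1,T2,X1,X2] is encoded by its
exponent vector (c1, c2, d1, d2).\<close>

type_synonym mono = "nat \<times> nat \<times> nat \<times> nat"

definition bideg :: "nat \<Rightarrow> mono \<Rightarrow> int \<times> nat" where
  "bideg \<eta> m = (case m of (c1, c2, d1, d2) \<Rightarrow>
      (int c1 + int c2 - int \<eta> * int d1, d1 + d2))"

definition Mons :: "nat \<Rightarrow> int \<Rightarrow> nat \<Rightarrow> mono set" where
  "Mons \<eta> \<delta>T \<delta>X = {m. bideg \<eta> m = (\<delta>T, \<delta>X)}"

definition mono_less :: "mono \<Rightarrow> mono \<Rightarrow> bool" where
  "mono_less m' m = (case m' of (c1', c2', d1', d2') \<Rightarrow> case m of (c1, c2, d1, d2) \<Rightarrow>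
      d1' + d2' < d1 + d2
    \<or> (d1' + d2' = d1 + d2 \<and> d2' < d2)
    \<or> (d1' = d1 \<and> d2' = d2 \<and> c2' < c2)
    \<or> (d1' = d1 \<and> d2' = d2 \<and> c2' = c2 \<and> c1' < c1))"

definition is_leading :: "(mono \<Rightarrow> 'a::zero) \<Rightarrow> mono \<Rightarrow> bool" where
  "is_leading f m \<longleftrightarrow> f m \<noteq> 0 \<and> (\<forall>m'. f m' \<noteq> 0 \<longrightarrow> m' = m \<or> mono_less m' m)"

definition mono_dvd :: "mono \<Rightarrow> mono \<Rightarrow> bool" where
  "mono_dvd a b = (case a of (a1, a2, a3, a4) \<Rightarrow> case b of (b1, b2, b3, b4) \<Rightarrow>
      a1 \<le> b1 \<and> a2 \<le> b2 \<and> a3 \<le> b3 \<and> a4 \<le> b4)"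

definition mon_poly :: "mono \<Rightarrow> (mono \<Rightarrow> 'a::{zero,one})" where
  "mon_poly m = (\<lambda>x. if x = m then 1 else 0)"

definition ddelta :: "nat \<Rightarrow> int \<Rightarrow> nat \<Rightarrow> int" where
  "ddelta \<eta> \<delta>T \<delta>X = \<delta>T + int \<eta> * int \<delta>X"

definition Mmon :: "nat \<Rightarrow> int \<Rightarrow> nat \<Rightarrow> nat \<Rightarrow> nat \<Rightarrow> mono" where
  "Mmon \<eta> \<delta>T \<delta>X d2 c2 =
     (nat (ddelta \<eta> \<delta>T \<delta>X - int \<eta> * int d2 - int c2), c2, \<delta>X - d2, d2)"

definition Aval :: "nat \<Rightarrow> int \<Rightarrow> nat \<Rightarrow> rat" where
  "Aval \<eta> \<delta>T \<delta>X = (if \<delta>T \<ge> 0 then of_nat \<delta>X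
                     else of_int (ddelta \<eta> \<delta>T \<delta>X) / of_nat \<eta>)"

definition AX :: "nat \<Rightarrow> nat \<Rightarrow> int \<Rightarrow> nat \<Rightarrow> nat set" where
  "AX q \<eta> \<delta>T \<delta>X =
     {\<alpha>. int \<alpha> \<le> min \<lfloor>Aval \<eta> \<delta>T \<delta>X\<rfloor> (int q - 1)} \<union> {\<alpha>. of_nat \<alpha> = Aval \<eta> \<delta>T \<delta>X}"

definition Kset :: "nat \<Rightarrow> nat \<Rightarrow> int \<Rightarrow> nat \<Rightarrow> (nat \<times> nat) set" where
  "Kset q \<eta> \<delta>T \<delta>X = {(\<alpha>, \<beta>). \<alpha> \<in> AX q \<eta> \<delta>T \<delta>X \<and>
      (int \<beta> \<le> min (ddelta \<eta> \<delta>T \<delta>X - int \<eta> * int \<alpha>) (int q) - 1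
       \<or> int \<beta> = ddelta \<eta> \<delta>T \<delta>X - int \<eta> * int \<alpha>)}"

definition Hcond :: "nat \<Rightarrow> nat \<Rightarrow> int \<Rightarrow> nat \<Rightarrow> bool" where
  "Hcond q \<eta> \<delta>T \<delta>X \<longleftrightarrow> \<eta> \<ge> 2 \<and> \<delta>T < 0 \<and> int \<eta> dvd \<delta>T \<and>
      int q \<le> int \<delta>X + \<delta>T div int \<eta>"

definition Kstar :: "nat \<Rightarrow> nat \<Rightarrow> int \<Rightarrow> nat \<Rightarrow> (nat \<times> nat) set" where
  "Kstar q \<eta> \<delta>T \<delta>X = (if Hcond q \<eta> \<delta>T \<delta>X
      then Kset q \<eta> \<delta>T \<delta>X - {(nat (ddelta \<eta> \<delta>T \<delta>X div int \<eta>), 0)}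
      else Kset q \<eta> \<delta>T \<delta>X)"

definition Delta_star :: "nat \<Rightarrow> nat \<Rightarrow> int \<Rightarrow> nat \<Rightarrow> mono set" where
  "Delta_star q \<eta> \<delta>T \<delta>X = (\<lambda>(\<alpha>, \<beta>). Mmon \<eta> \<delta>T \<delta>X \<alpha> \<beta>) ` Kstar q \<eta> \<delta>T \<delta>X"

text \<open>The map p; the representative in {1,...,q-1} of a residue class of n \<ge> 1
  modulo q-1 is (n-1) mod (q-1) + 1.\<close>
definition pmap :: "nat \<Rightarrow> nat \<Rightarrow> int \<Rightarrow> nat \<Rightarrow> nat \<Rightarrow> nat \<Rightarrow> nat \<times> nat" where
  "pmap q \<eta> \<delta>T \<delta>X d2 c2 =
    (let d2' = (if d2 = 0 \<or> of_nat d2 = Aval \<eta> \<delta>T \<delta>X then d2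
                else (d2 - 1) mod (q - 1) + 1);
         c2' = (if c2 = 0 then 0
                else if int c2 = ddelta \<eta> \<delta>T \<delta>X - int \<eta> * int d2
                  then nat (ddelta \<eta> \<delta>T \<delta>X - int \<eta> * int d2')
                else (c2 - 1) mod (q - 1) + 1)
     in (d2', c2'))"

definition pi_mon :: "nat \<Rightarrow> nat \<Rightarrow> int \<Rightarrow> nat \<Rightarrow> mono \<Rightarrow> (mono \<Rightarrow> 'a::ring_1)" where
  "pi_mon q \<eta> \<delta>T \<delta>X m =
    (let d2 = snd (snd (snd m)); c2 = fst (snd m);
         s = nat (ddelta \<eta> \<delta>T \<delta>X div int \<eta>)
     in if Hcond q \<eta> \<delta>T \<delta>X \<and> d2 = s \<and> c2 = 0
        then (let r = (s - 1) mod (q - 1) + 1; k = (s - r) div (q - 1)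
              in (\<lambda>x. mon_poly (Mmon \<eta> \<delta>T \<delta>X r 0) x
                 + mon_poly (Mmon \<eta> \<delta>T \<delta>X r (\<eta> * k * (q - 1))) x
                 - mon_poly (Mmon \<eta> \<delta>T \<delta>X r (q - 1)) x))
        else mon_poly (case pmap q \<eta> \<delta>T \<delta>X d2 c2 of (a, b) \<Rightarrow> Mmon \<eta> \<delta>T \<delta>X a b))"

definition Gset :: "nat \<Rightarrow> nat \<Rightarrow> (mono \<Rightarrow> 'a::ring_1) set" where
  "Gset q \<eta> = {g. \<exists>\<delta>T \<delta>X m. ddelta \<eta> \<delta>T \<delta>X \<ge> 0 \<and>
      m \<in> Mons \<eta> \<delta>T \<delta>X - Delta_star q \<eta> \<delta>T \<delta>X \<and>
      g = (\<lambda>x. mon_poly m x - pi_mon q \<eta> \<delta>T \<delta>X m x)}"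

end

theory Submission
  imports Defs
begin

text \<open>Every monomial T1^c1 T2^c2 X1^d1 X2^d2 has exactly one bidegree, and in it it is
M(d2, c2). So membership in \<Delta>* becomes an explicit condition on the exponents
(\<open>standard_mono\<close>), which is visibly closed under division. For a monomial M outside
\<Delta>*, the map p strictly decreases (d2, c2) lexicographically, and the exceptional
image under (H) has a smaller d2; hence \<pi>(M) involves only monomials below M, and
M - \<pi>(M) has leading monomial M.\<close>

definition standard_mono :: "nat \<Rightarrow> nat \<Rightarrow> mono \<Rightarrow> bool" where
  "standard_mono q \<eta> m = (case m of (c1, c2, d1, d2) \<Rightarrow>
      (c1 = 0 \<or> c2 < q) \<and> (d2 < q \<or> d1 = 0 \<or> \<eta> = 1 \<and> c1 = 0 \<and> c2 = 0))"

lemma bideg_eq_iff: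
  "bideg \<eta> (c1, c2, d1, d2) = (\<delta>T, \<delta>X) \<longleftrightarrow>
     \<delta>T = int c1 + int c2 - int \<eta> * int d1 \<and> \<delta>X = d1 + d2"
  by (auto simp: bideg_def)

lemma ddelta_bideg:
  assumes "bideg \<eta> (c1, c2, d1, d2) = (\<delta>T, \<delta>X)"
  shows "ddelta \<eta> \<delta>T \<delta>X = int c1 + int c2 + int \<eta> * int d2"
  using assms by (simp add: bideg_eq_iff ddelta_def algebra_simps)

lemma Mmon_bideg:
  assumes "bideg \<eta> (c1, c2, d1, d2) = (\<delta>T, \<delta>X)"
  shows "Mmon \<eta> \<delta>T \<delta>X d2 c2 = (c1, c2, d1, d2)"
  using assms by (simp add: Mmon_def ddelta_bideg bideg_eq_iff)

lemma Aval_ge: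
  assumes "bideg \<eta> (c1, c2, d1, d2) = (\<delta>T, \<delta>X)"
  shows "of_nat d2 \<le> Aval \<eta> \<delta>T \<delta>X"
proof (cases "\<delta>T \<ge> 0")
  case True
  then show ?thesis using assms by (simp add: Aval_def bideg_eq_iff)
next
  case False
  then have "\<eta> > 0" using assms by (cases \<eta>) (auto simp: bideg_eq_iff)
  then show ?thesis using False assms by (simp add: Aval_def ddelta_bideg le_divide_eq)
qed

lemma Aval_eq_iff:
  assumes "bideg \<eta> (c1, c2, d1, d2) = (\<delta>T, \<delta>X)"
  shows "of_nat d2 = Aval \<eta> \<delta>T \<delta>X \<longleftrightarrow> (if \<delta>T \<ge> 0 then d1 = 0 else c1 + c2 = 0)"
proof (cases "\<delta>T \<ge> 0")
  case True
  then show ?thesis using assms by (simp add: Aval_def bideg_eq_iff)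
next
  case False
  then have "\<eta> > 0" using assms by (cases \<eta>) (auto simp: bideg_eq_iff)
  then have "of_nat d2 = Aval \<eta> \<delta>T \<delta>X \<longleftrightarrow>
      rat_of_int (int d2 * int \<eta>) = of_int (int c1 + int c2 + int \<eta> * int d2)"
    using False assms by (simp add: Aval_def ddelta_bideg eq_divide_eq)
  also have "\<dots> \<longleftrightarrow> c1 + c2 = 0"
    by (simp only: of_int_eq_iff mult.commute[of "int d2"]) linarith
  finally show ?thesis using False by simp
qed

lemma Kset_iff:
  assumes "q \<ge> 1" and "bideg \<eta> (c1, c2, d1, d2) = (\<delta>T, \<delta>X)"
  shows "(d2, c2) \<in> Kset q \<eta> \<delta>T \<delta>X \<longleftrightarrow>
    (d2 < q \<or> of_nat d2 = Aval \<eta> \<delta>T \<delta>X) \<and> (c1 = 0 \<or> c2 < q)"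
proof -
  have "int d2 \<le> \<lfloor>Aval \<eta> \<delta>T \<delta>X\<rfloor>"
    using Aval_ge[OF assms(2)] by (simp add: le_floor_iff)
  then show ?thesis
    using assms unfolding Kset_def AX_def ddelta_bideg[OF assms(2)] by auto
qed

lemma Hcond_exceptional_iff:
  assumes "bideg \<eta> (c1, c2, d1, d2) = (\<delta>T, \<delta>X)"
  shows "(Hcond q \<eta> \<delta>T \<delta>X \<and> d2 = nat (ddelta \<eta> \<delta>T \<delta>X div int \<eta>) \<and> c2 = 0) \<longleftrightarrow>
    \<eta> \<ge> 2 \<and> c1 = 0 \<and> c2 = 0 \<and> d1 \<ge> 1 \<and> q \<le> d2"
proof (cases "\<eta> \<ge> 2 \<and> c2 = 0")
  case False
  then show ?thesis by (auto simp: Hcond_def)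
next
  case True
  have \<delta>T: "\<delta>T = int c1 - int \<eta> * int d1" and \<delta>X: "\<delta>X = d1 + d2"
    using assms True by (auto simp: bideg_eq_iff)
  have "ddelta \<eta> \<delta>T \<delta>X div int \<eta> = int (c1 div \<eta>) + int d2"
    using True by (simp add: ddelta_bideg[OF assms] zdiv_int)
  then have "d2 = nat (ddelta \<eta> \<delta>T \<delta>X div int \<eta>) \<longleftrightarrow> c1 < \<eta>"
    using True by (simp add: div_eq_0_iff flip: of_nat_add)
  moreover have "int \<eta> dvd \<delta>T \<longleftrightarrow> \<eta> dvd c1"
    using zdvd_reduce[of "int \<eta>" "\<delta>T" "int d1"] by (simp add: \<delta>T)
  moreover have "\<eta> dvd c1 \<and> c1 < \<eta> \<longleftrightarrow> c1 = 0"
    using True by (auto dest: dvd_imp_le)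
  ultimately have "(Hcond q \<eta> \<delta>T \<delta>X \<and> d2 = nat (ddelta \<eta> \<delta>T \<delta>X div int \<eta>)) \<longleftrightarrow>
      c1 = 0 \<and> \<delta>T < 0 \<and> int q \<le> int \<delta>X + \<delta>T div int \<eta>"
    using True unfolding Hcond_def by blast
  moreover have "c1 = 0 \<Longrightarrow> \<delta>T div int \<eta> = - int d1"
    using True nonzero_mult_div_cancel_left[of "int \<eta>" "- int d1"] by (simp add: \<delta>T)
  ultimately show ?thesis
    using True by (auto simp: \<delta>T \<delta>X zero_less_mult_iff)
qed

lemma Kstar_iff:
  assumes "q \<ge> 1" and bd: "bideg \<eta> (c1, c2, d1, d2) = (\<delta>T, \<delta>X)"
  shows "(d2, c2) \<in> Kstar q \<eta> \<delta>T \<delta>X \<longleftrightarrow> standard_mono q \<eta> (c1, c2, d1, d2)"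
proof -
  have "(d2, c2) \<in> Kstar q \<eta> \<delta>T \<delta>X \<longleftrightarrow> (d2, c2) \<in> Kset q \<eta> \<delta>T \<delta>X \<and>
      \<not> (Hcond q \<eta> \<delta>T \<delta>X \<and> d2 = nat (ddelta \<eta> \<delta>T \<delta>X div int \<eta>) \<and> c2 = 0)"
    unfolding Kstar_def by auto
  also have "\<dots> \<longleftrightarrow> (d2 < q \<or> (if \<delta>T \<ge> 0 then d1 = 0 else c1 + c2 = 0)) \<and> (c1 = 0 \<or> c2 < q) \<and>
      \<not> (\<eta> \<ge> 2 \<and> c1 = 0 \<and> c2 = 0 \<and> d1 \<ge> 1 \<and> q \<le> d2)"
    by (simp only: Kset_iff[OF assms] Aval_eq_iff[OF bd] Hcond_exceptional_iff[OF bd] conj_assoc)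
  also have "\<dots> \<longleftrightarrow> standard_mono q \<eta> (c1, c2, d1, d2)"
    using bd by (cases "\<eta> \<ge> 2") (auto simp: standard_mono_def bideg_eq_iff not_le zero_less_mult_iff)
  finally show ?thesis .
qed

lemma Kset_bounds:
  assumes K: "(\<alpha>, \<beta>) \<in> Kset q \<eta> \<delta>T \<delta>X" and nonneg: "ddelta \<eta> \<delta>T \<delta>X \<ge> 0"
  shows "\<alpha> \<le> \<delta>X" and "int \<eta> * int \<alpha> + int \<beta> \<le> ddelta \<eta> \<delta>T \<delta>X"
proof -
  have A: "of_nat \<alpha> \<le> Aval \<eta> \<delta>T \<delta>X"
    using K unfolding Kset_def AX_def by (auto simp: le_floor_iff)
  have "\<alpha> \<le> \<delta>X \<and> int \<eta> * int \<alpha> \<le> ddelta \<eta> \<delta>T \<delta>X"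
  proof (cases "\<delta>T \<ge> 0")
    case True
    then have "\<alpha> \<le> \<delta>X" using A by (simp add: Aval_def)
    moreover have "int \<eta> * int \<alpha> \<le> int \<eta> * int \<delta>X"
      using \<open>\<alpha> \<le> \<delta>X\<close> by (simp add: mult_left_mono)
    ultimately show ?thesis using True by (simp add: ddelta_def)
  next
    case False
    then have "\<eta> > 0" using nonneg by (cases \<eta>) (auto simp: ddelta_def)
    then have "rat_of_int (int \<eta> * int \<alpha>) \<le> of_int (ddelta \<eta> \<delta>T \<delta>X)"
      using A False by (simp add: Aval_def le_divide_eq mult.commute)
    then have "int \<eta> * int \<alpha> \<le> ddelta \<eta> \<delta>T \<delta>X"
      by (simp only: of_int_le_iff)
    moreover from this have "int \<eta> * int \<alpha> < int \<eta> * int \<delta>X"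
      using False by (simp add: ddelta_def)
    ultimately show ?thesis by (simp add: mult_less_cancel_left)
  qed
  moreover have "int \<beta> \<le> ddelta \<eta> \<delta>T \<delta>X - int \<eta> * int \<alpha>"
    using K unfolding Kset_def by auto
  ultimately show "\<alpha> \<le> \<delta>X" and "int \<eta> * int \<alpha> + int \<beta> \<le> ddelta \<eta> \<delta>T \<delta>X"
    by simp_all
qed

lemma Delta_star_subset_Mons:
  assumes "ddelta \<eta> \<delta>T \<delta>X \<ge> 0"
  shows "Delta_star q \<eta> \<delta>T \<delta>X \<subseteq> Mons \<eta> \<delta>T \<delta>X"
proof
  fix m assume "m \<in> Delta_star q \<eta> \<delta>T \<delta>X"
  then obtain \<alpha> \<beta> where K: "(\<alpha>, \<beta>) \<in> Kset q \<eta> \<delta>T \<delta>X" and m: "m = Mmon \<eta> \<delta>T \<delta>X \<alpha> \<beta>"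
    unfolding Delta_star_def Kstar_def by (auto split: if_splits)
  show "m \<in> Mons \<eta> \<delta>T \<delta>X"
    using Kset_bounds[OF K assms]
    by (simp add: m Mons_def Mmon_def bideg_def ddelta_def of_nat_diff algebra_simps)
qed

lemma Delta_star_iff:
  assumes "q \<ge> 1" and "bideg \<eta> m = (\<delta>T, \<delta>X)"
  shows "m \<in> Delta_star q \<eta> \<delta>T \<delta>X \<longleftrightarrow> standard_mono q \<eta> m"
proof -
  obtain c1 c2 d1 d2 where m: "m = (c1, c2, d1, d2)" by (cases m rule: prod_cases4)
  have "m \<in> Delta_star q \<eta> \<delta>T \<delta>X \<longleftrightarrow> (d2, c2) \<in> Kstar q \<eta> \<delta>T \<delta>X"
  proof
    assume "m \<in> Delta_star q \<eta> \<delta>T \<delta>X"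
    then obtain \<alpha> \<beta> where "(\<alpha>, \<beta>) \<in> Kstar q \<eta> \<delta>T \<delta>X" and "m = Mmon \<eta> \<delta>T \<delta>X \<alpha> \<beta>"
      unfolding Delta_star_def by auto
    then show "(d2, c2) \<in> Kstar q \<eta> \<delta>T \<delta>X" by (simp add: m Mmon_def)
  next
    assume "(d2, c2) \<in> Kstar q \<eta> \<delta>T \<delta>X"
    then show "m \<in> Delta_star q \<eta> \<delta>T \<delta>X"
      using Mmon_bideg[of \<eta> c1 c2 d1 d2] assms(2) unfolding Delta_star_def m by force
  qed
  then show ?thesis using Kstar_iff[OF assms(1)] assms(2) m by simp
qed

lemma Union_Delta_star_eq:
  assumes "q \<ge> 1"
  shows "\<Union>{Delta_star q \<eta> \<delta>T \<delta>X | \<delta>T \<delta>X. ddelta \<eta> \<delta>T \<delta>X \<ge> 0} = {m. standard_mono q \<eta> m}"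
proof (intro set_eqI iffI)
  fix m assume "m \<in> \<Union>{Delta_star q \<eta> \<delta>T \<delta>X | \<delta>T \<delta>X. ddelta \<eta> \<delta>T \<delta>X \<ge> 0}"
  then obtain \<delta>T \<delta>X where "ddelta \<eta> \<delta>T \<delta>X \<ge> 0" and D: "m \<in> Delta_star q \<eta> \<delta>T \<delta>X" by blast
  then have "bideg \<eta> m = (\<delta>T, \<delta>X)" using Delta_star_subset_Mons D by (force simp: Mons_def)
  then show "m \<in> {m. standard_mono q \<eta> m}" using Delta_star_iff[OF assms] D by simp
next
  fix m assume std: "m \<in> {m. standard_mono q \<eta> m}"
  obtain c1 c2 d1 d2 where m: "m = (c1, c2, d1, d2)" by (cases m rule: prod_cases4)
  obtain \<delta>T \<delta>X where bd: "bideg \<eta> m = (\<delta>T, \<delta>X)" by fastforce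
  then have "ddelta \<eta> \<delta>T \<delta>X \<ge> 0" using ddelta_bideg[of \<eta> c1 c2 d1 d2] by (simp add: m)
  moreover have "m \<in> Delta_star q \<eta> \<delta>T \<delta>X" using Delta_star_iff[OF assms bd] std by simp
  ultimately show "m \<in> \<Union>{Delta_star q \<eta> \<delta>T \<delta>X | \<delta>T \<delta>X. ddelta \<eta> \<delta>T \<delta>X \<ge> 0}"
    by blast
qed

lemma mono_less_irrefl: "\<not> mono_less m m"
  by (cases m rule: prod_cases4) (auto simp: mono_less_def)

lemma mono_less_asym: "mono_less l m \<Longrightarrow> \<not> mono_less m l"
  by (cases l rule: prod_cases4; cases m rule: prod_cases4) (auto simp: mono_less_def)

lemma mono_dvd_refl: "mono_dvd m m"
  by (cases m rule: prod_cases4) (simp add: mono_dvd_def)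

lemma standard_mono_dvd:
  assumes "mono_dvd l m" and "standard_mono q \<eta> m"
  shows "standard_mono q \<eta> l"
  using assms
  by (cases l rule: prod_cases4; cases m rule: prod_cases4)
     (auto simp: mono_dvd_def standard_mono_def)

lemma shifted_mod_le:
  fixes n k :: nat
  assumes "n \<noteq> 0" and "k \<noteq> 0"
  shows "(n - 1) mod k + 1 \<le> n" and "(n - 1) mod k + 1 \<le> k"
  using assms by (simp_all add: Suc_le_eq le_less_trans[OF mod_less_eq_dividend])

lemma Mmon_mono_less:
  assumes "bideg \<eta> (c1, c2, d1, d2) = (\<delta>T, \<delta>X)" and "a < d2 \<or> a = d2 \<and> b < c2"
  shows "mono_less (Mmon \<eta> \<delta>T \<delta>X a b) (c1, c2, d1, d2)"
  using assms by (auto simp: Mmon_def mono_less_def bideg_eq_iff)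

lemma pmap_decreasing:
  assumes "q \<ge> 2" and bd: "bideg \<eta> (c1, c2, d1, d2) = (\<delta>T, \<delta>X)"
    and "(d2, c2) \<notin> Kset q \<eta> \<delta>T \<delta>X" and pm: "pmap q \<eta> \<delta>T \<delta>X d2 c2 = (a, b)"
  shows "a < d2 \<or> a = d2 \<and> b < c2"
proof -
  have a: "a = (if d2 = 0 \<or> of_nat d2 = Aval \<eta> \<delta>T \<delta>X then d2 else (d2 - 1) mod (q - 1) + 1)"
    and b: "b = (if c2 = 0 then 0 else if int c2 = ddelta \<eta> \<delta>T \<delta>X - int \<eta> * int d2
                 then nat (ddelta \<eta> \<delta>T \<delta>X - int \<eta> * int a) else (c2 - 1) mod (q - 1) + 1)"
    using pm by (auto simp: pmap_def Let_def)
  have "a \<le> d2" and "a = d2 \<Longrightarrow> d2 < q \<or> of_nat d2 = Aval \<eta> \<delta>T \<delta>X"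
    using shifted_mod_le[of d2 "q - 1"] \<open>q \<ge> 2\<close> by (auto simp: a split: if_splits)
  \<comment> \<open>When d2 is kept, (d2, c2) \<notin> K forces c1 \<noteq> 0 and c2 \<ge> q; then c2 differs from both
     0 and \<delta> - \<eta> d2 = c1 + c2, so it is reduced modulo q - 1.\<close>
  moreover have "b < c2" if "a = d2" "c1 \<noteq> 0" "c2 \<ge> q"
    using that shifted_mod_le[of c2 "q - 1"] \<open>q \<ge> 2\<close> ddelta_bideg[OF bd] by (simp add: b)
  ultimately show ?thesis
    using Kset_iff[OF _ bd] assms(1,3) by fastforce
qed

lemma pi_mon_support_less:
  assumes q: "q \<ge> 2" and bd: "bideg \<eta> (c1, c2, d1, d2) = (\<delta>T, \<delta>X)"
    and nstd: "\<not> standard_mono q \<eta> (c1, c2, d1, d2)"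
    and nz: "(pi_mon q \<eta> \<delta>T \<delta>X (c1, c2, d1, d2) x :: 'a::ring_1) \<noteq> 0"
  shows "mono_less x (c1, c2, d1, d2)"
proof (cases "Hcond q \<eta> \<delta>T \<delta>X \<and> d2 = nat (ddelta \<eta> \<delta>T \<delta>X div int \<eta>) \<and> c2 = 0")
  case True
  define r where "r = (d2 - 1) mod (q - 1) + 1"
  have "q \<le> d2" using True Hcond_exceptional_iff[OF bd] by simp
  then have "r < d2" using shifted_mod_le(2)[of d2 "q - 1"] q by (simp add: r_def)
  moreover have "\<exists>b. x = Mmon \<eta> \<delta>T \<delta>X r b"
    using nz True by (auto simp: pi_mon_def Let_def mon_poly_def r_def split: if_splits)
  ultimately show ?thesis using Mmon_mono_less[OF bd] by blast
next
  case False
  obtain a b where pm: "pmap q \<eta> \<delta>T \<delta>X d2 c2 = (a, b)" by fastforce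
  then have "x = Mmon \<eta> \<delta>T \<delta>X a b"
    using nz False by (auto simp: pi_mon_def Let_def mon_poly_def split: if_splits)
  moreover have "(d2, c2) \<notin> Kset q \<eta> \<delta>T \<delta>X"
    using Kstar_iff[of q, OF _ bd] nstd False q by (auto simp: Kstar_def split: if_splits)
  ultimately show ?thesis using pmap_decreasing[OF q bd _ pm] Mmon_mono_less[OF bd] by blast
qed

lemma is_leading_unique:
  assumes "is_leading f l" and "is_leading f m"
  shows "l = m"
  using assms mono_less_asym unfolding is_leading_def by blast

lemma is_leading_mon_poly_minus_pi_mon:
  assumes "q \<ge> 2" and "bideg \<eta> m = (\<delta>T, \<delta>X)" and "\<not> standard_mono q \<eta> m"
  shows "is_leading (\<lambda>x. mon_poly m x - (pi_mon q \<eta> \<delta>T \<delta>X m x :: 'a::ring_1)) m"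
proof -
  have less: "mono_less x m" if "(pi_mon q \<eta> \<delta>T \<delta>X m x :: 'a) \<noteq> 0" for x
    using pi_mon_support_less[OF assms(1)] assms(2,3) that by (cases m rule: prod_cases4) blast
  then have "(pi_mon q \<eta> \<delta>T \<delta>X m m :: 'a) = 0" using mono_less_irrefl by blast
  then show ?thesis using less by (auto simp: is_leading_def mon_poly_def)
qed

lemma Gset_leading_not_standard:
  assumes "q \<ge> 2" and "g \<in> Gset q \<eta>" and "is_leading g l"
  shows "\<not> standard_mono q \<eta> l"
proof -
  obtain \<delta>T \<delta>X m where bd: "bideg \<eta> m = (\<delta>T, \<delta>X)" and "m \<notin> Delta_star q \<eta> \<delta>T \<delta>X"
    and g: "g = (\<lambda>x. mon_poly m x - pi_mon q \<eta> \<delta>T \<delta>X m x)"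
    using assms(2) unfolding Gset_def Mons_def by blast
  then have "\<not> standard_mono q \<eta> m" using Delta_star_iff assms(1) by simp
  moreover have "l = m"
    using is_leading_unique assms(3) is_leading_mon_poly_minus_pi_mon[OF assms(1) bd]
      calculation g by blast
  ultimately show ?thesis by simp
qed

lemma Gset_leading_exists:
  assumes "q \<ge> 2" and "\<not> standard_mono q \<eta> m"
  shows "\<exists>g \<in> (Gset q \<eta> :: (mono \<Rightarrow> 'a::ring_1) set). is_leading g m"
proof -
  obtain c1 c2 d1 d2 where m: "m = (c1, c2, d1, d2)" by (cases m rule: prod_cases4)
  obtain \<delta>T \<delta>X where bd: "bideg \<eta> m = (\<delta>T, \<delta>X)" by fastforce
  have "ddelta \<eta> \<delta>T \<delta>X \<ge> 0" using bd ddelta_bideg[of \<eta> c1 c2 d1 d2] by (simp add: m)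
  moreover have "m \<in> Mons \<eta> \<delta>T \<delta>X - Delta_star q \<eta> \<delta>T \<delta>X"
    using bd Delta_star_iff[OF _ bd] assms by (simp add: Mons_def)
  ultimately have "(\<lambda>x. mon_poly m x - (pi_mon q \<eta> \<delta>T \<delta>X m x :: 'a)) \<in> Gset q \<eta>"
    unfolding Gset_def by blast
  then show ?thesis using is_leading_mon_poly_minus_pi_mon[OF assms(1) bd assms(2)] by blast
qed

theorem lemma3p9:
  fixes q \<eta> :: nat
  assumes "card (UNIV :: ('a::{finite,field}) set) = q"
  shows "(\<Union>{Delta_star q \<eta> \<delta>T \<delta>X | \<delta>T \<delta>X. ddelta \<eta> \<delta>T \<delta>X \<ge> 0})
       = {m :: mono. \<not> (\<exists>g \<in> (Gset q \<eta> :: (mono \<Rightarrow> 'a) set).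
                          \<exists>l. is_leading g l \<and> mono_dvd l m)}"
proof -
  have "card {0::'a, 1} \<le> card (UNIV :: 'a set)" by (rule card_mono) auto
  then have q: "q \<ge> 2" using assms by simp
  have "standard_mono q \<eta> m \<longleftrightarrow>
      \<not> (\<exists>g \<in> (Gset q \<eta> :: (mono \<Rightarrow> 'a) set). \<exists>l. is_leading g l \<and> mono_dvd l m)" for m
    using Gset_leading_not_standard[OF q] standard_mono_dvd
      Gset_leading_exists[OF q, where 'a = 'a] mono_dvd_refl by blast
  then show ?thesis using Union_Delta_star_eq q by simp
qed

end
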